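(* Suppose that (A1) and (V4') hold, and let $\theta^*\in\mathbb{R}^d$ satisfy $\bar f(\theta^* )=0$. Then there are positive constants $\delta_1$, $b$ and $c$ such that every solution of $\frac{d}{dt}\vartheta_t=\bar f(\vartheta_t)$ satisfies, with $\tilde\vartheta_t=\vartheta_t-\theta^*$, $$\|\tilde\vartheta_t\|\le b\|\tilde\vartheta_0\|e^{-\delta_1t}\qquad\text{for all } 0\le t\le\tau_c,\quad \tau_c=\min\{t\ge0:\|\tilde\vartheta_t\|\le c\}.$$
   Context: $\bar f\colon\mathbb{R}^d\to\mathbb{R}^d$ is the mean vector field of a QSA ODE $\frac{d}{dt}\Theta_t=\alpha f(\Theta_t,\xi_t)$, where $\xi_t$ is an almost periodic probing signal and $\bar f(\theta)$ is the time average of $f(\theta,\xi_t)$. (A1): there is $L_f<\infty$ with $\|\bar f(\theta')-\bar f(\theta)\|\le L_f\|\theta'-\theta\|$ and $\|f(\theta',\xi)-f(\theta,\xi)\|+\|f(\theta,\xi')-f(\theta,\xi)\|\le L_f[\|\theta'-\theta\|+\|\xi'-\xi\|]$ for all arguments. (V4'): there exist $V\colon\mathbb{R}^d\to\mathbb{R}_+$ and constants $L_V<\infty$, $\delta_0,\delta,T>0$ such that $|V(\theta')-V(\theta)|\le L_V\|\theta'-\theta\|$ for all $\theta,\theta'$, $V(\theta)\ge\|\theta\|$ when $\|\theta\|\ge\delta_0^{-1}$, and every solution of $\frac{d}{dt}\vartheta=\bar f(\vartheta)$ satisfies $V(\vartheta_{\tau+T})-V(\vartheta_\tau)\le-\delta\|\vartheta_\tau\|$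 for all $\tau\ge0$ with $\|\vartheta_\tau\|>\delta^{-1}$. If the set defining $\tau_c$ is empty, $\tau_c=\infty$. *)

theory Defs
  imports "HOL-Analysis.Analysis"
begin

definition ode_solution :: "('a::euclidean_space \<Rightarrow> 'a) \<Rightarrow> (real \<Rightarrow> 'a) \<Rightarrow> bool" where
  "ode_solution fbar x \<longleftrightarrow>
     (\<forall>t\<ge>0. (x has_vector_derivative fbar (x t)) (at t within {0..}))"

text \<open>tau_c = min{t >= 0 : norm (x t - theta_star) <= c}, with value infinity if the set is empty.\<close>
definition hit_time :: "(real \<Rightarrow> 'a::real_normed_vector) \<Rightarrow> 'a \<Rightarrow> real \<Rightarrow> ereal" where
  "hit_time x \<theta>s c = Inf (ereal ` {t. t \<ge> 0 \<and> norm (x t - \<theta>s) \<le> c})"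

end

theory Submission
  imports Defs
begin

text \<open>Before the hitting time the solution stays outside a large ball, where V is comparable
to the norm; there the drift condition makes V contract by the fixed factor A / (A + \<delta>) over
every period T, so V, and with it the distance to \<theta>*, decays geometrically along the grid of
multiples of T. Between grid points, Gronwall's inequality for the Lipschitz mean field bounds the
growth of the distance by e^{L T}, which only enters the constant b.\<close>

lemma ode_solution_dist_growth:
  fixes fbar :: "'a::euclidean_space \<Rightarrow> 'a"
  assumes field_bound: "\<And>y. norm (fbar y) \<le> L * norm (y - \<theta>s)"
    and sol: "ode_solution fbar x" and "0 \<le> a" "a \<le> t"
  shows "norm (x t - \<theta>s) \<le> exp (L * (t - a)) * norm (x a - \<theta>s)"
proof -
  define g where "g s = exp (- 2 * L * s) * ((x s - \<theta>s) \<bullet> (x s - \<theta>s))" for s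
  have der: "(x has_vector_derivative fbar (x s)) (at s within {0..})" if "0 \<le> s" for s
    using sol that unfolding ode_solution_def by auto
  have "g t \<le> g a"
  proof (rule DERIV_nonpos_imp_decreasing_open[OF \<open>a \<le> t\<close>])
    fix s assume s: "a < s" "s < t"
    let ?y = "x s - \<theta>s" and ?e = "exp (- 2 * L * s)"
    have "(x has_vector_derivative fbar (x s)) (at s)"
      using der[of s] s \<open>0 \<le> a\<close> at_within_interior[of s "{0..}"] by auto
    then have "(x has_derivative (\<lambda>h. h *\<^sub>R fbar (x s))) (at s)"
      by (simp add: has_vector_derivative_def)
    then have "(g has_derivative (\<lambda>h. 2 * ?e * (?y \<bullet> fbar (x s) - L * (?y \<bullet> ?y)) * h)) (at s)"
      unfolding g_def by (auto intro!: derivative_eq_intros simp: algebra_simps inner_commute)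
    then have "DERIV g s :> 2 * ?e * (?y \<bullet> fbar (x s) - L * (?y \<bullet> ?y))"
      by (simp add: has_field_derivative_def)
    moreover have "?y \<bullet> fbar (x s) \<le> L * (?y \<bullet> ?y)"
    proof -
      have "?y \<bullet> fbar (x s) \<le> norm ?y * norm (fbar (x s))" by (rule norm_cauchy_schwarz)
      also have "\<dots> \<le> norm ?y * (L * norm ?y)" by (simp add: field_bound mult_left_mono)
      finally show ?thesis by (simp add: power2_norm_eq_inner[symmetric] power2_eq_square algebra_simps)
    qed
    ultimately show "\<exists>d. DERIV g s :> d \<and> d \<le> 0"
      by (auto simp: mult_nonneg_nonpos)
  next
    have "continuous_on {0..} x"
      using der by (meson atLeast_iff continuous_on_eq_continuous_within has_vector_derivative_continuous)
    then show "continuous_on {a..t} g"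
      unfolding g_def using \<open>0 \<le> a\<close> by (auto intro!: continuous_intros elim: continuous_on_subset)
  qed
  then have "(norm (x t - \<theta>s))\<^sup>2 \<le> exp (2 * L * (t - a)) * (norm (x a - \<theta>s))\<^sup>2"
    by (simp add: g_def power2_norm_eq_inner exp_diff exp_minus field_simps)
  also have "\<dots> = (exp (L * (t - a)) * norm (x a - \<theta>s))\<^sup>2"
    by (simp add: power_mult_distrib power2_eq_square exp_add[symmetric])
  finally show ?thesis
    by (rule power2_le_imp_le) simp
qed

lemma exists_grid_interval:
  fixes t T :: real
  assumes "0 < t" "0 < T"
  obtains m :: nat where "real m * T < t" "t \<le> (real m + 1) * T"
proof -
  define m where "m = nat (\<lceil>t / T\<rceil> - 1)"
  have "1 \<le> \<lceil>t / T\<rceil>"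
    using assms by (simp add: zero_less_ceiling)
  then have "real m = of_int \<lceil>t / T\<rceil> - 1"
    by (simp add: m_def)
  then have "real m < t / T" "t / T \<le> real m + 1"
    by linarith+
  with assms show ?thesis
    using that[of m] by (simp add: field_simps)
qed

lemma exp_decay_of_grid_contraction:
  fixes v w :: "real \<Rightarrow> real"
  assumes "0 < T" "0 < q" "q \<le> 1" "0 < t" "0 \<le> G" "0 \<le> B" "0 \<le> v 0"
    and growth: "\<And>a. 0 \<le> a \<Longrightarrow> a < t \<Longrightarrow> t \<le> a + T \<Longrightarrow> w t \<le> G * w a"
    and contraction: "\<And>\<tau>. 0 \<le> \<tau> \<Longrightarrow> \<tau> < t \<Longrightarrow> v (\<tau> + T) \<le> q * v \<tau>"
    and dominated: "\<And>\<tau>. 0 \<le> \<tau> \<Longrightarrow> \<tau> < t \<Longrightarrow> w \<tau> \<le> B * v \<tau>"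
  shows "w t \<le> B * G / q * v 0 * exp (ln q / T * t)"
proof -
  obtain m :: nat where m: "real m * T < t" "t \<le> (real m + 1) * T"
    using exists_grid_interval[OF \<open>0 < t\<close> \<open>0 < T\<close>] .
  have grid_before_t: "real k * T < t" if "k \<le> m" for k
  proof -
    have "real k * T \<le> real m * T"
      using that \<open>0 < T\<close> by simp
    with m(1) show ?thesis
      by linarith
  qed
  have geometric: "v (real k * T) \<le> q ^ k * v 0" if "k \<le> m" for k
    using that
  proof (induction k)
    case (Suc k)
    have "v (real (Suc k) * T) = v (real k * T + T)"
      by (simp add: algebra_simps)
    also have "\<dots> \<le> q * v (real k * T)"
      using contraction grid_before_t Suc.prems \<open>0 < T\<close> by simp
    also have "\<dots> \<le> q * (q ^ k * v 0)"
      using Suc \<open>0 < q\<close> by simp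
    finally show ?case
      by simp
  qed simp
  have "q ^ (m + 1) = exp (real (m + 1) * ln q)"
    using \<open>0 < q\<close> by (simp only: exp_of_nat_mult exp_ln)
  also have "\<dots> \<le> exp (ln q / T * t)"
  proof -
    have "t / T \<le> real (m + 1)"
      using m(2) \<open>0 < T\<close> by (simp add: field_simps)
    moreover have "ln q \<le> 0"
      using \<open>0 < q\<close> \<open>q \<le> 1\<close> by simp
    ultimately have "real (m + 1) * ln q \<le> t / T * ln q"
      by (rule mult_right_mono_neg)
    also have "\<dots> = ln q / T * t"
      by simp
    finally show ?thesis
      by simp
  qed
  finally have power_le: "q ^ m \<le> exp (ln q / T * t) / q"
    using \<open>0 < q\<close> by (simp add: field_simps)
  have "w t \<le> G * w (real m * T)"
    using growth m \<open>0 < T\<close> by (simp add: algebra_simps)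
  also have "\<dots> \<le> G * (B * (q ^ m * v 0))"
  proof -
    have "w (real m * T) \<le> B * v (real m * T)"
      using dominated m \<open>0 < T\<close> by simp
    also have "\<dots> \<le> B * (q ^ m * v 0)"
      using geometric[of m] \<open>0 \<le> B\<close> by (simp add: mult_left_mono)
    finally show ?thesis
      using \<open>0 \<le> G\<close> by (simp add: mult_left_mono)
  qed
  also have "\<dots> \<le> G * (B * (exp (ln q / T * t) / q * v 0))"
    using \<open>0 \<le> G\<close> \<open>0 \<le> B\<close> \<open>0 \<le> v 0\<close> by (intro mult_left_mono mult_right_mono power_le) auto
  finally show ?thesis
    by (simp add: algebra_simps)
qed

lemma dist_gt_before_hit_time:
  assumes "ereal t \<le> hit_time x \<theta>s c" "0 \<le> s" "s < t"
  shows "c < norm (x s - \<theta>s)"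
proof (rule ccontr)
  assume "\<not> c < norm (x s - \<theta>s)"
  then have "hit_time x \<theta>s c \<le> ereal s"
    unfolding hit_time_def using \<open>0 \<le> s\<close> by (intro Inf_lower) auto
  with assms(1) have "ereal t \<le> ereal s"
    by (rule order_trans)
  with \<open>s < t\<close> show False
    by simp
qed

lemma lipschitz_norm_le_dist_zero:
  fixes f :: "'a::real_normed_vector \<Rightarrow> 'b::real_normed_vector"
  assumes lip: "\<And>u v. norm (f v - f u) \<le> L * norm (v - u)" and "f z = 0"
  shows "norm (f y) \<le> \<bar>L\<bar> * norm (y - z)"
proof -
  have "norm (f y) \<le> L * norm (y - z)"
    using lip[of z y] \<open>f z = 0\<close> by (simp add: norm_minus_commute)
  also have "\<dots> \<le> \<bar>L\<bar> * norm (y - z)"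
    by (intro mult_right_mono) auto
  finally show ?thesis .
qed

lemma lipschitz_le_linear:
  fixes V :: "'a::real_normed_vector \<Rightarrow> real"
  assumes lip: "\<And>u v. \<bar>V v - V u\<bar> \<le> L * norm (v - u)" and "V 0 \<le> norm z"
  shows "V z \<le> (1 + \<bar>L\<bar>) * norm z"
proof -
  have "V z \<le> V 0 + \<bar>L\<bar> * norm z"
    using lip[of 0 z] mult_right_mono[OF abs_ge_self norm_ge_zero, of L z] by simp
  with \<open>V 0 \<le> norm z\<close> show ?thesis
    by (simp add: algebra_simps)
qed

lemma lyapunov_drift_contraction:
  fixes v v' n A \<delta> :: real
  assumes drift: "v' - v \<le> - \<delta> * n" and "v \<le> A * n" "0 \<le> v" "0 < A" "0 < \<delta>"
  shows "v' \<le> A / (A + \<delta>) * v"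
proof -
  have "\<delta> / (A + \<delta>) * v \<le> \<delta> / A * v"
    using assms by (intro mult_right_mono divide_left_mono) auto
  also have "\<dots> \<le> \<delta> * n"
    using assms by (simp add: field_simps)
  moreover have "A / (A + \<delta>) * v = v - \<delta> / (A + \<delta>) * v"
    using assms by (simp add: field_simps)
  ultimately show ?thesis
    using drift by linarith
qed

lemma solution_decay_before_hit_time:
  fixes fbar :: "'a::euclidean_space \<Rightarrow> 'a" and V :: "'a \<Rightarrow> real"
  assumes field_bound: "\<And>y. norm (fbar y) \<le> L * norm (y - \<theta>s)" and "0 \<le> L"
    and sol: "ode_solution fbar x"
    and "0 < T" "0 < q" "q \<le> 1" "1 \<le> A" "norm \<theta>s \<le> R"
    and V_lower: "\<And>z. R \<le> norm z \<Longrightarrow> norm z \<le> V z"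
    and V_upper: "\<And>z. R \<le> norm z \<Longrightarrow> V z \<le> A * norm z"
    and contraction: "\<And>\<tau>. 0 \<le> \<tau> \<Longrightarrow> R \<le> norm (x \<tau>) \<Longrightarrow> V (x (\<tau> + T)) \<le> q * V (x \<tau>)"
    and "0 \<le> t" "ereal t \<le> hit_time x \<theta>s (R + norm \<theta>s)"
  shows "norm (x t - \<theta>s) \<le> 4 * A * exp (L * T) / q * norm (x 0 - \<theta>s) * exp (ln q / T * t)"
proof (cases "t = 0")
  case True
  have "1 \<le> A * exp (L * T)"
    using mult_mono[of 1 A 1 "exp (L * T)"] \<open>1 \<le> A\<close> \<open>0 \<le> L\<close> \<open>0 < T\<close> by simp
  also have "\<dots> \<le> 4 * A * exp (L * T) / q"
    using \<open>0 < q\<close> \<open>q \<le> 1\<close> \<open>1 \<le> A\<close> by (simp add: field_simps)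
  finally have "1 \<le> 4 * A * exp (L * T) / q" .
  from mult_right_mono[OF this norm_ge_zero[of "x 0 - \<theta>s"]] True show ?thesis
    by simp
next
  case False
  with \<open>0 \<le> t\<close> have "0 < t"
    by simp
  have large: "R \<le> norm (x \<tau>)" and dist_large: "R < norm (x \<tau> - \<theta>s)"
    if "0 \<le> \<tau>" "\<tau> < t" for \<tau>
    using dist_gt_before_hit_time[OF \<open>ereal t \<le> _\<close> that] norm_triangle_ineq4[of "x \<tau>" \<theta>s]
      norm_ge_zero[of \<theta>s] \<open>norm \<theta>s \<le> R\<close> by linarith+
  have dominated: "norm (x \<tau> - \<theta>s) \<le> 2 * V (x \<tau>)" if "0 \<le> \<tau>" "\<tau> < t" for \<tau>
    using norm_triangle_ineq4[of "x \<tau>" \<theta>s] V_lower[OF large[OF that]] large[OF that]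
      \<open>norm \<theta>s \<le> R\<close> by linarith
  have growth: "norm (x t - \<theta>s) \<le> exp (L * T) * norm (x a - \<theta>s)"
    if "0 \<le> a" "a < t" "t \<le> a + T" for a
  proof -
    have "norm (x t - \<theta>s) \<le> exp (L * (t - a)) * norm (x a - \<theta>s)"
      using ode_solution_dist_growth[OF field_bound sol] that by simp
    also have "\<dots> \<le> exp (L * T) * norm (x a - \<theta>s)"
      using that \<open>0 \<le> L\<close> by (intro mult_right_mono) (simp_all add: mult_left_mono)
    finally show ?thesis .
  qed
  have V0_nonneg: "0 \<le> V (x 0)"
    using V_lower[OF large[of 0]] norm_ge_zero[of "x 0"] \<open>0 < t\<close> by linarith
  have "norm (x t - \<theta>s) \<le> 2 * exp (L * T) / q * V (x 0) * exp (ln q / T * t)"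
    using exp_decay_of_grid_contraction[where w = "\<lambda>\<tau>. norm (x \<tau> - \<theta>s)" and v = "\<lambda>\<tau>. V (x \<tau>)"]
      \<open>0 < T\<close> \<open>0 < q\<close> \<open>q \<le> 1\<close> \<open>0 < t\<close> V0_nonneg growth contraction large dominated
    by simp
  also have "\<dots> \<le> 2 * exp (L * T) / q * (2 * A * norm (x 0 - \<theta>s)) * exp (ln q / T * t)"
  proof -
    have "V (x 0) \<le> A * norm (x 0)"
      using V_upper large[of 0] \<open>0 < t\<close> by simp
    also have "\<dots> \<le> A * (norm (x 0 - \<theta>s) + norm \<theta>s)"
      using norm_triangle_ineq[of "x 0 - \<theta>s" \<theta>s] \<open>1 \<le> A\<close> by (intro mult_left_mono) auto
    also have "\<dots> \<le> 2 * A * norm (x 0 - \<theta>s)"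
      using dist_large[of 0] \<open>0 < t\<close> \<open>norm \<theta>s \<le> R\<close> \<open>1 \<le> A\<close> by (simp add: mult_left_mono)
    finally show ?thesis
      using \<open>0 < q\<close> by (intro mult_left_mono mult_right_mono) auto
  qed
  finally show ?thesis
    by (simp add: algebra_simps)
qed

theorem lemmaA10:
  fixes fbar :: "'a::euclidean_space \<Rightarrow> 'a"
    and V :: "'a \<Rightarrow> real"
    and L_f L_V \<delta>0 \<delta> T :: real
    and \<theta>s :: 'a
  assumes A1: "\<And>\<theta> \<theta>'. norm (fbar \<theta>' - fbar \<theta>) \<le> L_f * norm (\<theta>' - \<theta>)"
    and V_nonneg: "\<And>\<theta>. V \<theta> \<ge> 0"
    and V_lip: "\<And>\<theta> \<theta>'. \<bar>V \<theta>' - V \<theta>\<bar> \<le> L_V * norm (\<theta>' - \<theta>)"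
    and \<delta>0_pos: "\<delta>0 > 0" and \<delta>_pos: "\<delta> > 0" and T_pos: "T > 0"
    and V_coercive: "\<And>\<theta>. norm \<theta> \<ge> inverse \<delta>0 \<Longrightarrow> V \<theta> \<ge> norm \<theta>"
    and V_drift: "\<And>x \<tau>. ode_solution fbar x \<Longrightarrow> \<tau> \<ge> 0 \<Longrightarrow> norm (x \<tau>) > inverse \<delta> \<Longrightarrow>
                    V (x (\<tau> + T)) - V (x \<tau>) \<le> - \<delta> * norm (x \<tau>)"
    and eq: "fbar \<theta>s = 0"
  shows "\<exists>\<delta>1 b c. \<delta>1 > 0 \<and> b > 0 \<and> c > 0 \<and>
           (\<forall>x. ode_solution fbar x \<longrightarrow>
              (\<forall>t. 0 \<le> t \<and> ereal t \<le> hit_time x \<theta>s c \<longrightarrow>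
                 norm (x t - \<theta>s) \<le> b * norm (x 0 - \<theta>s) * exp (- \<delta>1 * t)))"
proof -
  define L A where "L = \<bar>L_f\<bar>" and "A = 1 + \<bar>L_V\<bar>"
  define q where "q = A / (A + \<delta>)"
  \<comment> \<open>beyond R the drift condition applies and V is squeezed between the norm and A times it\<close>
  define R where "R = max (max (inverse \<delta> + 1) (V 0)) (max (inverse \<delta>0) (norm \<theta>s))"
  have "1 \<le> A" "0 < q" "q < 1"
    using \<delta>_pos by (simp_all add: A_def q_def)
  have "0 < R" "norm \<theta>s \<le> R"
    using \<delta>_pos by (simp_all add: R_def less_max_iff_disj add_pos_pos)
  have V_lower: "norm z \<le> V z" if "R \<le> norm z" for z
    using V_coercive that by (simp add: R_def)
  have V_upper: "V z \<le> A * norm z" if "R \<le> norm z" for z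
    using lipschitz_le_linear[OF V_lip] that by (simp add: A_def R_def)
  have contraction: "V (x (\<tau> + T)) \<le> q * V (x \<tau>)"
    if "ode_solution fbar x" "0 \<le> \<tau>" "R \<le> norm (x \<tau>)" for x \<tau>
    unfolding q_def using that V_upper \<open>1 \<le> A\<close> \<delta>_pos V_nonneg
    by (intro lyapunov_drift_contraction[where n = "norm (x \<tau>)"] V_drift) (auto simp: R_def)
  show ?thesis
  proof (intro exI conjI allI impI)
    show "0 < - ln q / T" "0 < 4 * A * exp (L * T) / q" "0 < R + norm \<theta>s"
      using \<open>0 < q\<close> \<open>q < 1\<close> \<open>1 \<le> A\<close> T_pos \<open>0 < R\<close> by (auto simp: divide_neg_pos add_pos_nonneg)
    fix x t
    assume sol: "ode_solution fbar x"
      and t: "0 \<le> t \<and> ereal t \<le> hit_time x \<theta>s (R + norm \<theta>s)"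
    show "norm (x t - \<theta>s) \<le> 4 * A * exp (L * T) / q * norm (x 0 - \<theta>s) * exp (- (- ln q / T) * t)"
      using solution_decay_before_hit_time[OF lipschitz_norm_le_dist_zero[OF A1 eq] _ sol T_pos
          \<open>0 < q\<close> _ \<open>1 \<le> A\<close> \<open>norm \<theta>s \<le> R\<close> V_lower V_upper contraction[OF sol]]
        t \<open>q < 1\<close>
      by (simp add: L_def)
  qed
qed

end
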